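(* Let $K=[x_1,x_2]\times[y_1,y_2]\in T_h$, $h_x=x_2-x_1$, $h_y=y_2-y_1$. For $w,v\in U_h$, $$\int_{\partial K}n\cdot(A^c\nabla w)(\Pi_h^*v-v)\,ds=\frac{h_y^3h_x}{24}a^c_{11}v_{xy}w_{xy}+\frac{h_yh_x^3}{24}a^c_{22}v_{xy}w_{xy},$$ where $n$ is the outward unit normal of $K$, and $w_{xy},v_{xy}$ are the (constant) mixed derivatives of $w|_K$, $v|_K$.
   Context: $\Omega\subset\mathbb{R}^2$ is an open rectangle, $T_h$ a conforming partition of $\overline\Omega$ into closed rectangles with sides parallel to the axes, $N_h$ its set of nodes. $A=(a_{ij})_{2\times2}\in[W^{1,\infty}(\Omega)]^{2\times2}$, and $A^c=(a^c_{ij})$ is its piecewise constant approximation: $A^c|_K=\frac{1}{|K|}\int_KA$. The dual partition $T_h^*$ is obtained by connecting the center of each element to the midpoints of its edges; the control volume $K_P^*$ of a node $P$ is the union of the resulting sub-rectangles having $P$ as a vertex. $U_h=\{v\in C^0(\overline\Omega): v|_K\in Q_1(K)\ \forall K,\ v|_{\partial\Omega}=0\}$ ($Q_1$ = bilinear polynomials). $\Pi_h^*v=\sum_{P\in N_h}v(P)\chi_P$, $\chi_P$ the characteristic function of $K_P^*$. *)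

theory Defs
  imports "HOL-Analysis.Analysis"
begin

text \<open>An element (closed axis-parallel rectangle) is encoded by its lower-left and
upper-right corners: E = ((x1,y1),(x2,y2)) stands for [x1,x2] x [y1,y2].\<close>

type_synonym pt = "real \<times> real"
type_synonym elem = "pt \<times> pt"

definition elem_set :: "elem \<Rightarrow> pt set" where
  "elem_set E = cbox (fst E) (snd E)"

definition verts :: "elem \<Rightarrow> pt set" where
  "verts E = (case E of ((a,b),(c,d)) \<Rightarrow> {(a,b),(c,b),(a,d),(c,d)})"

definition faces :: "elem \<Rightarrow> pt set set" where
  "faces E = (case E of ((a,b),(c,d)) \<Rightarrow>
     {{(a,b)},{(c,b)},{(a,d)},{(c,d)},
      cbox (a,b) (c,b), cbox (c,b) (c,d), cbox (a,d) (c,d), cbox (a,b) (a,d)})"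

definition conforming_partition :: "pt set \<Rightarrow> elem set \<Rightarrow> bool" where
  "conforming_partition \<Omega> T \<longleftrightarrow>
     finite T \<and>
     (\<forall>E\<in>T. fst (fst E) < fst (snd E) \<and> snd (fst E) < snd (snd E)) \<and>
     \<Union>(elem_set ` T) = closure \<Omega> \<and>
     (\<forall>E\<in>T. \<forall>E'\<in>T. E \<noteq> E' \<longrightarrow>
        elem_set E \<inter> elem_set E' = {} \<or> elem_set E \<inter> elem_set E' \<in> faces E \<inter> faces E')"

definition nodes :: "elem set \<Rightarrow> pt set" where
  "nodes T = \<Union>(verts ` T)"

definition sub_rects :: "elem \<Rightarrow> elem set" where
  "sub_rects E = (case E of ((a,b),(c,d)) \<Rightarrow>
     let m = (a + c) / 2; n = (b + d) / 2 in
     {((a,b),(m,n)), ((m,b),(c,n)), ((a,n),(m,d)), ((m,n),(c,d))})"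

definition ctrl_vol :: "elem set \<Rightarrow> pt \<Rightarrow> pt set" where
  "ctrl_vol T P = \<Union>{elem_set S | S. S \<in> (\<Union>E\<in>T. sub_rects E) \<and> P \<in> verts S}"

definition Pi_star :: "elem set \<Rightarrow> (pt \<Rightarrow> real) \<Rightarrow> pt \<Rightarrow> real" where
  "Pi_star T v x = (\<Sum>P\<in>nodes T. v P * indicator (ctrl_vol T P) x)"

definition q1 :: "real \<Rightarrow> real \<Rightarrow> real \<Rightarrow> real \<Rightarrow> pt \<Rightarrow> real" where
  "q1 c0 c1 c2 c3 p = c0 + c1 * fst p + c2 * snd p + c3 * fst p * snd p"

definition grad_q1 :: "real \<Rightarrow> real \<Rightarrow> real \<Rightarrow> real \<Rightarrow> pt \<Rightarrow> pt" where
  "grad_q1 c0 c1 c2 c3 p = (c1 + c3 * snd p, c2 + c3 * fst p)"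

definition Uh :: "pt set \<Rightarrow> elem set \<Rightarrow> (pt \<Rightarrow> real) set" where
  "Uh \<Omega> T = {v. continuous_on (closure \<Omega>) v \<and>
     (\<forall>E\<in>T. \<exists>c0 c1 c2 c3. \<forall>p\<in>elem_set E. v p = q1 c0 c1 c2 c3 p) \<and>
     (\<forall>p\<in>frontier \<Omega>. v p = 0)}"

text \<open>Piecewise constant approximation: mean value over an element.\<close>
definition cavg :: "elem \<Rightarrow> (pt \<Rightarrow> real) \<Rightarrow> real" where
  "cavg E a = integral (elem_set E) a / Henstock_Kurzweil_Integration.content (elem_set E)"

text \<open>Boundary integral over the boundary of the rectangle E of (n . F) g ds, n the
outward unit normal, written out edge by edge.\<close>
definition bdry_int :: "elem \<Rightarrow> (pt \<Rightarrow> pt) \<Rightarrow> (pt \<Rightarrow> real) \<Rightarrow> real" where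
  "bdry_int E F g = (case E of ((x1,y1),(x2,y2)) \<Rightarrow>
       integral {y1..y2} (\<lambda>y. fst (F (x2,y)) * g (x2,y))
     - integral {y1..y2} (\<lambda>y. fst (F (x1,y)) * g (x1,y))
     + integral {x1..x2} (\<lambda>x. snd (F (x,y2)) * g (x,y2))
     - integral {x1..x2} (\<lambda>x. snd (F (x,y1)) * g (x,y1)))"

end

theory Submission
  imports Defs
begin

text \<open>On an edge of K, the interpolant \<open>\<Pi>\<^sub>h\<^sup>* v\<close> equals v at the nearer endpoint, since the
  conformity of the mesh forces every element touching the open edge to share that edge,
  so only the two dual sub-rectangles of K at its endpoints cover it. Hence on the
  vertical edge x = x0 the error \<open>\<Pi>\<^sub>h\<^sup>* v - v\<close> is a sawtooth of slope \<open>-\<partial>\<^sub>y v(x0,\<cdot>) = -(v2 + v3 x0)\<close>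
  vanishing at both endpoints, and the normal flux \<open>n \<cdot> A\<^sup>c \<nabla>w\<close> is affine with slope \<open>a\<^sup>c\<^sub>1\<^sub>1 w3\<close>.
  Integrating an affine function against such a sawtooth only sees the slope and gives
  \<open>a\<^sup>c\<^sub>1\<^sub>1 w3 (v2 + v3 x0) h\<^sub>y\<^sup>3 / 24\<close>; the difference of these terms over x = x2 and x = x1 is
  \<open>a\<^sup>c\<^sub>1\<^sub>1 w3 v3 h\<^sub>x h\<^sub>y\<^sup>3 / 24\<close>. The horizontal edges are the same computation after exchanging
  the coordinates.\<close>

lemma cbox_Pair_eq_iff:
  fixes a b c d a' b' c' d' :: real
  assumes "a \<le> c" "b \<le> d" "a' \<le> c'" "b' \<le> d'"
  shows "cbox (a,b) (c,d) = cbox (a',b') (c',d') \<longleftrightarrow> a = a' \<and> b = b' \<and> c = c' \<and> d = d'"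
  using assms by (auto simp: cbox_Pair_eq times_eq_iff)

lemma faces_Pair:
  "faces ((a,b),(c,d)) = {cbox (a,b) (a,b), cbox (c,b) (c,b), cbox (a,d) (a,d), cbox (c,d) (c,d),
      cbox (a,b) (c,b), cbox (c,b) (c,d), cbox (a,d) (c,d), cbox (a,b) (a,d)}"
  by (simp add: faces_def)

lemma verts_Pair: "verts ((a,b),(c,d)) = {(a,b),(c,b),(a,d),(c,d)}"
  by (simp add: verts_def)

lemma face_cbox_corners:
  fixes a b c d u1 u2 v1 v2 :: real
  assumes "a < c" "b < d" "u1 \<le> v1" "u2 \<le> v2" "cbox (u1,u2) (v1,v2) \<in> faces ((a,b),(c,d))"
  shows "(u1 = a \<or> u1 = c) \<and> (v1 = a \<or> v1 = c) \<and> (u2 = b \<or> u2 = d) \<and> (v2 = b \<or> v2 = d)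
    \<and> (u1 = v1 \<or> u2 = v2)"
  using assms(5) unfolding faces_Pair insert_iff empty_iff
  using assms(1-4) by (elim disjE; simp add: cbox_Pair_eq_iff del: cbox_idem)

lemma faceE:
  fixes a b c d :: real
  assumes "a < c" "b < d" "F \<in> faces ((a,b),(c,d))"
  obtains u1 u2 v1 v2 where "F = cbox (u1,u2) (v1,v2)" "u1 \<le> v1" "u2 \<le> v2"
    "(u1 = a \<or> u1 = c) \<and> (v1 = a \<or> v1 = c) \<and> (u2 = b \<or> u2 = d) \<and> (v2 = b \<or> v2 = d)
      \<and> (u1 = v1 \<or> u2 = v2)"
proof -
  obtain u1 u2 v1 v2 where F: "F = cbox (u1,u2) (v1,v2)" "u1 \<le> v1" "u2 \<le> v2"
    using assms unfolding faces_Pair by (auto simp del: cbox_idem)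
  show ?thesis using that[OF F] face_cbox_corners[OF assms(1,2) F(2,3)] assms(3) F(1) by simp
qed

lemma vertex_of_common_face:
  fixes a b c d a' b' c' d' p1 p2 :: real
  assumes "a < c" "b < d" "a' < c'" "b' < d'"
    and "F \<in> faces ((a,b),(c,d))" "F \<in> faces ((a',b'),(c',d'))"
    and "(p1,p2) \<in> F" "(p1,p2) \<in> verts ((a',b'),(c',d'))"
  shows "(p1,p2) \<in> verts ((a,b),(c,d))"
proof -
  obtain u1 u2 v1 v2 where F: "F = cbox (u1,u2) (v1,v2)" "u1 \<le> v1" "u2 \<le> v2"
    "(u1 = a \<or> u1 = c) \<and> (v1 = a \<or> v1 = c) \<and> (u2 = b \<or> u2 = d) \<and> (v2 = b \<or> v2 = d)
      \<and> (u1 = v1 \<or> u2 = v2)"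
    by (rule faceE[OF assms(1,2,5)])
  have "(u1 = a' \<or> u1 = c') \<and> (v1 = a' \<or> v1 = c') \<and> (u2 = b' \<or> u2 = d') \<and> (v2 = b' \<or> v2 = d')"
    using face_cbox_corners[OF assms(3,4) F(2,3)] assms(6) F(1) by simp
  moreover have "u1 \<le> p1" "p1 \<le> v1" "u2 \<le> p2" "p2 \<le> v2" using assms(7) F(1) by auto
  moreover have "(p1 = a' \<or> p1 = c') \<and> (p2 = b' \<or> p2 = d')" using assms(8) by (auto simp: verts_Pair)
  ultimately have "(p1 = a \<or> p1 = c) \<and> (p2 = b \<or> p2 = d)"
    using F(4) assms(1-4) by argo
  then show ?thesis by (auto simp: verts_Pair)
qed

lemma conforming_partition_nondeg:
  assumes "conforming_partition \<Omega> T" "((a,b),(c,d)) \<in> T"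
  shows "a < c" "b < d"
  using assms by (auto simp: conforming_partition_def)

lemma conforming_partition_inter_face:
  assumes "conforming_partition \<Omega> T" "E \<in> T" "E' \<in> T" "E \<noteq> E'"
    and "elem_set E \<inter> elem_set E' \<noteq> {}"
  shows "elem_set E \<inter> elem_set E' \<in> faces E" "elem_set E \<inter> elem_set E' \<in> faces E'"
  using assms unfolding conforming_partition_def by blast+

lemma finite_nodes: "conforming_partition \<Omega> T \<Longrightarrow> finite (nodes T)"
  by (auto simp: conforming_partition_def nodes_def verts_def split: prod.splits)

lemma node_in_elem_is_vertex:
  assumes cp: "conforming_partition \<Omega> T" and E: "E \<in> T"
    and P: "P \<in> nodes T" "P \<in> elem_set E"
  shows "P \<in> verts E"
proof (rule ccontr)
  assume nP: "P \<notin> verts E"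
  obtain E' where E': "E' \<in> T" "P \<in> verts E'" using P unfolding nodes_def by auto
  obtain a b c d where Ed: "E = ((a,b),(c,d))" by (metis prod.collapse)
  obtain a' b' c' d' where Ed': "E' = ((a',b'),(c',d'))" by (metis prod.collapse)
  obtain p1 p2 where Pd: "P = (p1,p2)" by (metis prod.collapse)
  have nd: "a < c" "b < d" "a' < c'" "b' < d'"
    using conforming_partition_nondeg[OF cp] E E' Ed Ed' by auto
  have PE': "P \<in> elem_set E'" using E'(2) nd unfolding Ed' Pd by (auto simp: verts_def elem_set_def)
  have "E \<noteq> E'" using nP E' by auto
  then have "elem_set E \<inter> elem_set E' \<in> faces E" "elem_set E \<inter> elem_set E' \<in> faces E'"
    using conforming_partition_inter_face[OF cp E E'(1)] P PE' by blast+
  then have "P \<in> verts E"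
    using vertex_of_common_face[OF nd, of "elem_set E \<inter> elem_set E'" p1 p2] P PE' E'(2)
    unfolding Ed Ed' Pd by auto
  with nP show False ..
qed

lemma elem_through_vertical_edge:
  fixes x0 y :: real
  assumes cp: "conforming_partition \<Omega> T" and K: "((x1,y1),(x2,y2)) \<in> T"
    and E: "((a,b),(c,d)) \<in> T" and q: "(x0,y) \<in> elem_set ((a,b),(c,d))"
    and x0: "x0 = x1 \<or> x0 = x2" and y: "y1 < y" "y < y2"
  shows "b = y1 \<and> d = y2 \<and> (a = x0 \<or> c = x0)"
proof (cases "((a,b),(c,d)) = ((x1,y1),(x2,y2))")
  case True
  then show ?thesis using x0 by auto
next
  case False
  have nd: "a < c" "b < d" "x1 < x2" "y1 < y2"
    using conforming_partition_nondeg[OF cp] E K by auto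
  let ?F = "elem_set ((a,b),(c,d)) \<inter> elem_set ((x1,y1),(x2,y2))"
  have qF: "(x0,y) \<in> ?F" using q x0 y nd by (auto simp: elem_set_def)
  then have F: "?F \<in> faces ((a,b),(c,d))" "?F \<in> faces ((x1,y1),(x2,y2))"
    using conforming_partition_inter_face[OF cp E K False] by blast+
  obtain u1 u2 v1 v2 where Fd: "?F = cbox (u1,u2) (v1,v2)" "u1 \<le> v1" "u2 \<le> v2"
    "(u1 = a \<or> u1 = c) \<and> (v1 = a \<or> v1 = c) \<and> (u2 = b \<or> u2 = d) \<and> (v2 = b \<or> v2 = d)
      \<and> (u1 = v1 \<or> u2 = v2)"
    by (rule faceE[OF nd(1,2) F(1)])
  have "(u1 = x1 \<or> u1 = x2) \<and> (v1 = x1 \<or> v1 = x2) \<and> (u2 = y1 \<or> u2 = y2) \<and> (v2 = y1 \<or> v2 = y2)"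
    using face_cbox_corners[OF nd(3,4) Fd(2,3)] F(2) Fd(1) by simp
  moreover have "u1 \<le> x0" "x0 \<le> v1" "u2 \<le> y" "y \<le> v2" using qF Fd(1) by auto
  ultimately show ?thesis using Fd(4) nd x0 y by argo
qed

lemma sub_rect_near_vertex:
  fixes a b c d p1 p2 q1 q2 :: real
  assumes "a < c" "b < d" "S \<in> sub_rects ((a,b),(c,d))" "(p1,p2) \<in> verts S"
    and "(p1,p2) \<in> verts ((a,b),(c,d))" "(q1,q2) \<in> elem_set S"
  shows "\<bar>p1 - q1\<bar> \<le> (c - a) / 2 \<and> \<bar>p2 - q2\<bar> \<le> (d - b) / 2"
  using assms(3) unfolding sub_rects_def Let_def prod.case insert_iff empty_iff
  using assms(1,2,4-6) by (elim disjE) (auto simp: verts_Pair elem_set_def)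

lemma sub_rects_subset:
  fixes a b c d :: real
  assumes "a < c" "b < d" "S \<in> sub_rects ((a,b),(c,d))"
  shows "verts S \<subseteq> elem_set ((a,b),(c,d))" "elem_set S \<subseteq> elem_set ((a,b),(c,d))"
  using assms(3) unfolding sub_rects_def Let_def prod.case insert_iff empty_iff
  using assms(1,2) by (auto simp: verts_Pair elem_set_def cbox_Pair_eq)

lemma ctrl_vol_vertical_edge:
  fixes x0 y y0 :: real
  assumes cp: "conforming_partition \<Omega> T" and K: "((x1,y1),(x2,y2)) \<in> T"
    and x0: "x0 = x1 \<or> x0 = x2" and y: "y1 < y" "y < y2"
    and y0: "(y0 = y1 \<and> y < (y1 + y2) / 2) \<or> (y0 = y2 \<and> (y1 + y2) / 2 < y)"
    and P: "P \<in> nodes T"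
  shows "(x0,y) \<in> ctrl_vol T P \<longleftrightarrow> P = (x0,y0)"
proof
  assume "(x0,y) \<in> ctrl_vol T P"
  then obtain S E where SE: "E \<in> T" "S \<in> sub_rects E" "P \<in> verts S" "(x0,y) \<in> elem_set S"
    unfolding ctrl_vol_def by blast
  obtain a b c d where Ed: "E = ((a,b),(c,d))" by (metis prod.collapse)
  obtain p1 p2 where Pd: "P = (p1,p2)" by (metis prod.collapse)
  have nd: "a < c" "b < d" using conforming_partition_nondeg[OF cp] SE(1) Ed by auto
  have qE: "(x0,y) \<in> elem_set E" and "P \<in> elem_set E"
    using sub_rects_subset[OF nd] SE Ed by blast+
  then have PV: "P \<in> verts E" using node_in_elem_is_vertex[OF cp SE(1) P] by blast
  have "b = y1 \<and> d = y2 \<and> (a = x0 \<or> c = x0)"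
    using elem_through_vertical_edge[OF cp K _ _ x0 y] SE(1) qE Ed by blast
  moreover have "\<bar>p1 - x0\<bar> \<le> (c - a) / 2 \<and> \<bar>p2 - y\<bar> \<le> (d - b) / 2"
    using sub_rect_near_vertex[OF nd, of S p1 p2 x0 y] SE PV Ed Pd by auto
  moreover have "(p1 = a \<or> p1 = c) \<and> (p2 = b \<or> p2 = d)" using PV Ed Pd by (auto simp: verts_Pair)
  ultimately have "p1 = x0 \<and> p2 = y0" using nd y y0 by argo
  then show "P = (x0,y0)" using Pd by simp
next
  assume P0: "P = (x0,y0)"
  have nd: "x1 < x2" "y1 < y2" using conforming_partition_nondeg[OF cp K] by auto
  define m where "m = (x1 + x2) / 2"
  define n where "n = (y1 + y2) / 2"
  define S where "S = ((if x0 = x1 then x1 else m, if y0 = y1 then y1 else n),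
                       (if x0 = x1 then m else x2, if y0 = y1 then n else y2))"
  have "S \<in> sub_rects ((x1,y1),(x2,y2))"
    using x0 y0 nd unfolding S_def sub_rects_def Let_def m_def n_def by auto
  moreover have "P \<in> verts S" using x0 y0 nd P0 unfolding S_def verts_def m_def n_def by auto
  moreover have "(x0,y) \<in> elem_set S"
    using x0 y0 y nd unfolding S_def elem_set_def m_def n_def by auto
  ultimately show "(x0,y) \<in> ctrl_vol T P" using K unfolding ctrl_vol_def by blast
qed

lemma Pi_star_eq_unique_node:
  assumes "conforming_partition \<Omega> T" "P0 \<in> nodes T"
    and "\<And>P. P \<in> nodes T \<Longrightarrow> q \<in> ctrl_vol T P \<longleftrightarrow> P = P0"
  shows "Pi_star T v q = v P0"
proof -
  have "Pi_star T v q = (\<Sum>P\<in>nodes T. if P = P0 then v P else 0)"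
    unfolding Pi_star_def by (rule sum.cong) (auto simp: indicator_def assms(3))
  also have "\<dots> = v P0" using assms(2) finite_nodes[OF assms(1)] by simp
  finally show ?thesis .
qed

lemma Pi_star_vertical_edge:
  fixes x0 y y0 :: real
  assumes cp: "conforming_partition \<Omega> T" and K: "((x1,y1),(x2,y2)) \<in> T"
    and x0: "x0 = x1 \<or> x0 = x2" and y: "y1 < y" "y < y2"
    and y0: "(y0 = y1 \<and> y < (y1 + y2) / 2) \<or> (y0 = y2 \<and> (y1 + y2) / 2 < y)"
  shows "Pi_star T v (x0,y) = v (x0,y0)"
proof (rule Pi_star_eq_unique_node[OF cp])
  show "(x0,y0) \<in> nodes T" using K x0 y0 unfolding nodes_def verts_def by auto
qed (rule ctrl_vol_vertical_edge[OF cp K x0 y y0])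

definition elem_swap :: "elem \<Rightarrow> elem" where
  "elem_swap E = (prod.swap (fst E), prod.swap (snd E))"

lemma elem_swap_Pair: "elem_swap ((a,b),(c,d)) = ((b,a),(d,c))"
  by (simp add: elem_swap_def)

lemma cbox_swap: "cbox (prod.swap p) (prod.swap q) = prod.swap ` cbox p q"
  by (cases p; cases q) (simp add: cbox_Pair_eq product_swap)

lemma elem_set_swap: "elem_set (elem_swap E) = prod.swap ` elem_set E"
  by (simp add: elem_set_def elem_swap_def cbox_swap)

lemma verts_swap: "verts (elem_swap E) = prod.swap ` verts E"
  by (auto simp: verts_def elem_swap_def split: prod.splits)

lemma faces_swap: "faces (elem_swap E) = image prod.swap ` faces E"
proof -
  obtain a b c d where "E = ((a,b),(c,d))" by (metis prod.collapse)
  then show ?thesis by (simp add: faces_def elem_swap_Pair insert_commute cbox_swap[symmetric])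
qed

lemma sub_rects_swap: "sub_rects (elem_swap E) = elem_swap ` sub_rects E"
  by (auto simp: sub_rects_def elem_swap_def Let_def add.commute split: prod.splits)

lemma linear_swap: "linear (prod.swap :: pt \<Rightarrow> pt)"
  by (rule linearI) auto

lemma conforming_partition_swap:
  assumes cp: "conforming_partition \<Omega> T"
  shows "conforming_partition (prod.swap ` \<Omega>) (elem_swap ` T)"
  unfolding conforming_partition_def
proof (intro conjI ballI impI)
  show "finite (elem_swap ` T)" using cp by (simp add: conforming_partition_def)
next
  fix E' assume "E' \<in> elem_swap ` T"
  then show "fst (fst E') < fst (snd E')" "snd (fst E') < snd (snd E')"
    using cp by (auto simp: conforming_partition_def elem_swap_def)
next
  have "\<Union>(elem_set ` elem_swap ` T) = prod.swap ` \<Union>(elem_set ` T)"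
    by (auto simp: elem_set_swap)
  then show "\<Union>(elem_set ` elem_swap ` T) = closure (prod.swap ` \<Omega>)"
    using cp closure_injective_linear_image[OF linear_swap] by (simp add: conforming_partition_def)
next
  fix E1 E2 assume "E1 \<in> elem_swap ` T" "E2 \<in> elem_swap ` T" "E1 \<noteq> E2"
  then obtain E E' where EE': "E \<in> T" "E' \<in> T" "E \<noteq> E'" "E1 = elem_swap E" "E2 = elem_swap E'"
    by blast
  have inter: "elem_set E1 \<inter> elem_set E2 = prod.swap ` (elem_set E \<inter> elem_set E')"
    by (simp add: EE' elem_set_swap image_Int)
  have "elem_set E \<inter> elem_set E' = {} \<or> elem_set E \<inter> elem_set E' \<in> faces E \<inter> faces E'"
    using cp EE' by (simp add: conforming_partition_def)
  then show "elem_set E1 \<inter> elem_set E2 = {} \<or> elem_set E1 \<inter> elem_set E2 \<in> faces E1 \<inter> faces E2"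
    unfolding inter by (auto simp: EE' faces_swap)
qed

lemma nodes_swap: "nodes (elem_swap ` T) = prod.swap ` nodes T"
  by (auto simp: nodes_def verts_swap)

lemma ctrl_vol_eq_Union: "ctrl_vol T P = \<Union>(elem_set ` {S \<in> \<Union>(sub_rects ` T). P \<in> verts S})"
  by (simp only: ctrl_vol_def setcompr_eq_image)

lemma ctrl_vol_swap: "ctrl_vol (elem_swap ` T) (prod.swap P) = prod.swap ` ctrl_vol T P"
proof -
  have "{S \<in> \<Union>(sub_rects ` elem_swap ` T). prod.swap P \<in> verts S}
      = elem_swap ` {S \<in> \<Union>(sub_rects ` T). P \<in> verts S}"
    by (auto simp: sub_rects_swap verts_swap inj_image_mem_iff)
  then show ?thesis
    by (simp add: ctrl_vol_eq_Union image_image elem_set_swap image_UN)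
qed

lemma Pi_star_swap: "Pi_star (elem_swap ` T) (v \<circ> prod.swap) (prod.swap q) = Pi_star T v q"
proof -
  have "indicator (ctrl_vol (elem_swap ` T) (prod.swap P)) (prod.swap q)
      = (indicator (ctrl_vol T P) q :: real)" for P
    by (simp add: ctrl_vol_swap indicator_def inj_image_mem_iff)
  then show ?thesis
    by (simp add: Pi_star_def nodes_swap sum.reindex)
qed

lemma has_integral_affine_times_affine:
  fixes s t \<alpha> \<beta> k u :: real
  assumes "s \<le> t"
  defines "\<Phi> \<equiv> \<lambda>y. k * (\<beta> * y^3 / 3 + (\<alpha> - \<beta> * u) * y^2 / 2 - \<alpha> * u * y)"
  shows "((\<lambda>y. (\<alpha> + \<beta> * y) * (k * (y - u))) has_integral \<Phi> t - \<Phi> s) {s..t}"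
proof (rule fundamental_theorem_of_calculus[OF assms(1)])
  fix x :: real
  have "(\<Phi> has_real_derivative (\<alpha> + \<beta> * x) * (k * (x - u))) (at x within {s..t})"
    unfolding \<Phi>_def by (auto intro!: derivative_eq_intros simp: field_simps power2_eq_square)
  then show "(\<Phi> has_vector_derivative (\<alpha> + \<beta> * x) * (k * (x - u))) (at x within {s..t})"
    by (simp add: has_real_derivative_iff_has_vector_derivative)
qed

lemma integral_affine_times_sawtooth:
  fixes s t \<alpha> \<beta> k :: real and g :: "real \<Rightarrow> real"
  assumes st: "s < t"
    and g1: "\<And>y. s < y \<Longrightarrow> y < (s + t) / 2 \<Longrightarrow> g y = k * (y - s)"
    and g2: "\<And>y. (s + t) / 2 < y \<Longrightarrow> y < t \<Longrightarrow> g y = k * (y - t)"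
  shows "integral {s..t} (\<lambda>y. (\<alpha> + \<beta> * y) * g y) = - k * \<beta> * (t - s)^3 / 24"
proof -
  define m where "m = (s + t) / 2"
  define \<Phi> where "\<Phi> u y = k * (\<beta> * y^3 / 3 + (\<alpha> - \<beta> * u) * y^2 / 2 - \<alpha> * u * y)" for u y
  have sm: "s \<le> m" "m \<le> t" using st by (auto simp: m_def)
  have "((\<lambda>y. (\<alpha> + \<beta> * y) * g y) has_integral \<Phi> s m - \<Phi> s s) {s..m}"
    unfolding \<Phi>_def
    by (rule has_integral_spike_finite[of "{s,m}", OF _ _ has_integral_affine_times_affine[OF sm(1)]])
      (auto simp: g1 m_def)
  moreover have "((\<lambda>y. (\<alpha> + \<beta> * y) * g y) has_integral \<Phi> t t - \<Phi> t m) {m..t}"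
    unfolding \<Phi>_def
    by (rule has_integral_spike_finite[of "{m,t}", OF _ _ has_integral_affine_times_affine[OF sm(2)]])
      (auto simp: g2 m_def)
  moreover have "(\<Phi> s m - \<Phi> s s) + (\<Phi> t t - \<Phi> t m) = - k * \<beta> * (t - s)^3 / 24"
    unfolding m_def \<Phi>_def by (simp add: field_simps power2_eq_square power3_eq_cube)
  ultimately show ?thesis
    using has_integral_combine[OF sm] by (metis integral_unique)
qed

lemma integral_vertical_edge_Pi_star_error:
  fixes x0 \<alpha> \<beta> :: real
  assumes cp: "conforming_partition \<Omega> T" and K: "((x1,y1),(x2,y2)) \<in> T"
    and x0: "x0 = x1 \<or> x0 = x2"
    and v: "\<forall>p\<in>elem_set ((x1,y1),(x2,y2)). v p = q1 v0 v1 v2 v3 p"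
  shows "integral {y1..y2} (\<lambda>y. (\<alpha> + \<beta> * y) * (Pi_star T v (x0,y) - v (x0,y)))
    = (v2 + v3 * x0) * \<beta> * (y2 - y1)^3 / 24"
proof -
  have nd: "x1 < x2" "y1 < y2" using conforming_partition_nondeg[OF cp K] by auto
  have vK: "v (x0,y) = q1 v0 v1 v2 v3 (x0,y)" if "y1 \<le> y" "y \<le> y2" for y
    using v x0 nd that by (auto simp: elem_set_def)
  have "integral {y1..y2} (\<lambda>y. (\<alpha> + \<beta> * y) * (Pi_star T v (x0,y) - v (x0,y)))
      = - (- (v2 + v3 * x0)) * \<beta> * (y2 - y1)^3 / 24"
  proof (rule integral_affine_times_sawtooth[OF nd(2)])
    fix y assume y: "y1 < y" "y < (y1 + y2) / 2"
    have "Pi_star T v (x0,y) = v (x0,y1)"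
      by (rule Pi_star_vertical_edge[OF cp K x0]) (use y nd in auto)
    then show "Pi_star T v (x0,y) - v (x0,y) = - (v2 + v3 * x0) * (y - y1)"
      using vK[of y] vK[of y1] y nd by (simp add: q1_def algebra_simps)
  next
    fix y assume y: "(y1 + y2) / 2 < y" "y < y2"
    have "Pi_star T v (x0,y) = v (x0,y2)"
      by (rule Pi_star_vertical_edge[OF cp K x0]) (use y nd in auto)
    then show "Pi_star T v (x0,y) - v (x0,y) = - (v2 + v3 * x0) * (y - y2)"
      using vK[of y] vK[of y2] y nd by (simp add: q1_def algebra_simps)
  qed
  then show ?thesis by simp
qed

lemma integral_horizontal_edge_Pi_star_error:
  fixes y0 \<alpha> \<beta> :: real
  assumes cp: "conforming_partition \<Omega> T" and K: "((x1,y1),(x2,y2)) \<in> T"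
    and y0: "y0 = y1 \<or> y0 = y2"
    and v: "\<forall>p\<in>elem_set ((x1,y1),(x2,y2)). v p = q1 v0 v1 v2 v3 p"
  shows "integral {x1..x2} (\<lambda>x. (\<alpha> + \<beta> * x) * (Pi_star T v (x,y0) - v (x,y0)))
    = (v1 + v3 * y0) * \<beta> * (x2 - x1)^3 / 24"
proof -
  have K': "((y1,x1),(y2,x2)) \<in> elem_swap ` T"
    using K by (metis elem_swap_Pair image_eqI)
  have v': "\<forall>p\<in>elem_set ((y1,x1),(y2,x2)). (v \<circ> prod.swap) p = q1 v0 v2 v1 v3 p"
    using v by (auto simp: elem_set_swap[of "((x1,y1),(x2,y2))", unfolded elem_swap_Pair] q1_def)
  have "Pi_star T v (x,y0) = Pi_star (elem_swap ` T) (v \<circ> prod.swap) (y0,x)" for x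
    using Pi_star_swap[of T v "(x,y0)"] by simp
  then have "integral {x1..x2} (\<lambda>x. (\<alpha> + \<beta> * x) * (Pi_star T v (x,y0) - v (x,y0)))
    = integral {x1..x2} (\<lambda>x. (\<alpha> + \<beta> * x)
        * (Pi_star (elem_swap ` T) (v \<circ> prod.swap) (y0,x) - (v \<circ> prod.swap) (y0,x)))"
    by simp
  also have "\<dots> = (v1 + v3 * y0) * \<beta> * (x2 - x1)^3 / 24"
    by (rule integral_vertical_edge_Pi_star_error[OF conforming_partition_swap[OF cp] K' y0 v'])
  finally show ?thesis .
qed

theorem lemma4p2:
  fixes X1 X2 Y1 Y2 x1 x2 y1 y2 :: real
    and T :: "elem set"
    and a11 a12 a21 a22 :: "pt \<Rightarrow> real"
    and w v :: "pt \<Rightarrow> real"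
    and w0 w1 w2 w3 v0 v1 v2 v3 :: real
  assumes "X1 < X2" and "Y1 < Y2"
    and "conforming_partition (box (X1,Y1) (X2,Y2)) T"
    and "\<exists>L. L-lipschitz_on (box (X1,Y1) (X2,Y2)) a11"
    and "\<exists>L. L-lipschitz_on (box (X1,Y1) (X2,Y2)) a12"
    and "\<exists>L. L-lipschitz_on (box (X1,Y1) (X2,Y2)) a21"
    and "\<exists>L. L-lipschitz_on (box (X1,Y1) (X2,Y2)) a22"
    and K: "((x1,y1),(x2,y2)) \<in> T"
    and "w \<in> Uh (box (X1,Y1) (X2,Y2)) T" and "v \<in> Uh (box (X1,Y1) (X2,Y2)) T"
    and "\<forall>p\<in>elem_set ((x1,y1),(x2,y2)). w p = q1 w0 w1 w2 w3 p"
    and "\<forall>p\<in>elem_set ((x1,y1),(x2,y2)). v p = q1 v0 v1 v2 v3 p"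
  shows "let K = ((x1,y1),(x2,y2)); hx = x2 - x1; hy = y2 - y1;
             c11 = cavg K a11; c12 = cavg K a12; c21 = cavg K a21; c22 = cavg K a22
         in bdry_int K
              (\<lambda>p. let g = grad_q1 w0 w1 w2 w3 p
                   in (c11 * fst g + c12 * snd g, c21 * fst g + c22 * snd g))
              (\<lambda>p. Pi_star T v p - v p)
            = hy^3 * hx / 24 * c11 * v3 * w3 + hy * hx^3 / 24 * c22 * v3 * w3"
proof -
  note cp = assms(3) and v = assms(12)
  define c11 where "c11 = cavg ((x1,y1),(x2,y2)) a11"
  define c12 where "c12 = cavg ((x1,y1),(x2,y2)) a12"
  define c21 where "c21 = cavg ((x1,y1),(x2,y2)) a21"
  define c22 where "c22 = cavg ((x1,y1),(x2,y2)) a22"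
  have vertical: "integral {y1..y2} (\<lambda>y. (c11 * (w1 + w3 * y) + c12 * (w2 + w3 * x0))
      * (Pi_star T v (x0,y) - v (x0,y))) = (v2 + v3 * x0) * (c11 * w3) * (y2 - y1)^3 / 24"
    if "x0 = x1 \<or> x0 = x2" for x0
    using integral_vertical_edge_Pi_star_error[OF cp K that v,
        of "c11 * w1 + c12 * (w2 + w3 * x0)" "c11 * w3"]
    by (simp add: algebra_simps)
  have horizontal: "integral {x1..x2} (\<lambda>x. (c21 * (w1 + w3 * y0) + c22 * (w2 + w3 * x))
      * (Pi_star T v (x,y0) - v (x,y0))) = (v1 + v3 * y0) * (c22 * w3) * (x2 - x1)^3 / 24"
    if "y0 = y1 \<or> y0 = y2" for y0
    using integral_horizontal_edge_Pi_star_error[OF cp K that v,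
        of "c21 * (w1 + w3 * y0) + c22 * w2" "c22 * w3"]
    by (simp add: algebra_simps)
  show ?thesis
    unfolding Let_def bdry_int_def prod.case grad_q1_def fst_conv snd_conv
      c11_def[symmetric] c12_def[symmetric] c21_def[symmetric] c22_def[symmetric]
    by (simp only: vertical horizontal simp_thms) (simp add: field_simps)
qed

end
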